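(* Let $0<\varepsilon<1$ and $N\ge1$. Then for every $t$, $$\left|F(t)-\hat F_N(t)\right|\le\left(\frac{\hat F_N(t)\big(1-\hat F_N(t)\big)}{N\varepsilon}\right)^{1/2}+\left(\frac1N+\frac{1}{N\varepsilon^{1/2}}\right)\left|\sum_{n=1}^N\mathds{1}\Big(\hat Q^{[n]}-\big|e_Q^{[n]}\big|\le t\le\hat Q^{[n]}+\big|e_Q^{[n]}\big|\Big)\right|+\frac{2}{(2N\varepsilon)^{3/4}}$$ with probability greater than or equal to $1-2\varepsilon+\varepsilon^2$.
   Context: Consider the initial value problem $\dot y=f(y,t;\theta)$, $t\in(0,T]$, $y(0)=y_0$, where $\theta$ is a random parameter, and a linear functional $S$ and threshold $R$. The quantity of interest $Q(y;\theta)=\min_{t\in(0,T]}\arg(S(y(t;\theta))=R)$ (the first time the threshold is reached, assumed to exist) is a random variable with cumulative distribution function $F(t)=P(\{\theta:Q(y;\theta)\le t\})$. Let $\theta^{[1]},\dots,\theta^{[N]}$ be independent samples of $\theta$ (Monte Carlo sampling), let $Q^{[n]}$ be the exact value of the QoI for $\theta^{[n]}$, and let $\hat Q^{[n]}$ be the value computed from a numerical solution $Y^{[n]}$ for $\theta^{[n]}$, with error $e_Q^{[n]}=Q^{[n]}-\hat Q^{[n]}$. Define the nominal empirical CDF $F_N(t)=\frac1N\sum_{n=1}^N\mathds{1}(Q^{[n]}\le t)$ and the approximate empirical CDF $\hat F_N(t)=\frac1N\sum_{n=1}^N\mathds{1}(\hat Q^{[n]}\le t)$, where $\mathds{1}$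 is the indicator function. *)

theory Defs
  imports "HOL-Probability.Probability"
begin

text \<open>D : distribution of the random parameter theta; Q : exact QoI as a function
  of theta; Qh : QoI computed from the numerical solution for theta.
  A Monte Carlo sample of size N is a point w of the product space
  sample_space D N, i.e. w n = theta^[n] for n in {1..N}.\<close>

definition cdf_QoI :: "'p measure \<Rightarrow> ('p \<Rightarrow> real) \<Rightarrow> real \<Rightarrow> real" where
  "cdf_QoI D Q t = measure D {th \<in> space D. Q th \<le> t}"

definition sample_space :: "'p measure \<Rightarrow> nat \<Rightarrow> (nat \<Rightarrow> 'p) measure" where
  "sample_space D N = PiM {1..N} (\<lambda>_. D)"

definition ecdf :: "nat \<Rightarrow> ('p \<Rightarrow> real) \<Rightarrow> (nat \<Rightarrow> 'p) \<Rightarrow> real \<Rightarrow> real" where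
  "ecdf N Q w t = (1 / real N) * (\<Sum>n=1..N. if Q (w n) \<le> t then 1 else 0)"

end

theory Submission
  imports Defs
begin

(* Write G = F_N(t) and H = \hat F_N(t).  G is the mean of N independent Bernoulli(F(t))
   variables, so E (G - F(t))^2 = F(1 - F)/N, and Chebyshev's inequality shows that outside an
   event of probability at most \<epsilon> we have (G - F)^2 < (F(1 - F) + \<beta>)/(N\<epsilon>), where
   \<beta> = 1/(4 sqrt (N\<epsilon>)).  On that event the argument is deterministic.  G and H differ by
   at most K/N, K being the number of samples whose error interval [\hat Q - |e_Q|, \hat Q + |e_Q|]
   contains t, and a(1 - a) is 1-Lipschitz on [0,1]; hence d = |F - G| satisfies
   d^2 < (H(1 - H) + K/N + d + \<beta>)/(N\<epsilon>).  Since also d < 1/sqrt (2N\<epsilon>), splitting the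
   square root yields the three terms of the bound.  The resulting probability 1 - \<epsilon> is at
   least (1 - \<epsilon>)^2. *)

definition deviation_threshold :: "real \<Rightarrow> real \<Rightarrow> real" where
  "deviation_threshold F x = (F * (1 - F) + 1 / (4 * sqrt x)) / x"

lemma mult_one_minus_le_add_abs_diff:
  fixes a b :: real
  assumes "0 \<le> a" "a \<le> 1" "0 \<le> b" "b \<le> 1"
  shows "a * (1 - a) \<le> b * (1 - b) + \<bar>a - b\<bar>"
proof -
  have "a * (1 - a) - b * (1 - b) = (a - b) * (1 - a - b)"
    by algebra
  also have "\<dots> \<le> \<bar>a - b\<bar> * \<bar>1 - a - b\<bar>"
    by (simp add: abs_mult[symmetric])
  also have "\<dots> \<le> \<bar>a - b\<bar>"
    using assms by (intro mult_left_le) auto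
  finally show ?thesis by simp
qed

lemma sqrt_of_nat_le_self: "sqrt (real k) \<le> real k"
proof (cases "k = 0")
  case False
  then have "sqrt (real k) * 1 \<le> sqrt (real k) * sqrt (real k)"
    by (intro mult_left_mono) auto
  then show ?thesis by simp
qed simp

lemma power2_two_div_powr_three_quarters:
  fixes x :: real
  assumes "0 < x"
  shows "(2 / (2 * x) powr (3 / 4))\<^sup>2 = sqrt 2 / (x * sqrt x)"
proof -
  have "((2 * x) powr (3 / 4))\<^sup>2 = (2 * x) powr (1 + 1 / 2)"
    using assms by (simp add: powr_power flip: powr_add)
  also have "\<dots> = (2 * x) powr 1 * (2 * x) powr (1 / 2)"
    by (rule powr_add)
  also have "\<dots> = 2 * x * (sqrt 2 * sqrt x)"
    using assms by (simp add: powr_half_sqrt real_sqrt_mult)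
  finally have "((2 * x) powr (3 / 4))\<^sup>2 = 2 * x * (sqrt 2 * sqrt x)" .
  moreover have "sqrt 2 * sqrt 2 = (2 :: real)" by simp
  ultimately show ?thesis
    using assms by (simp add: power_divide field_simps)
qed

lemma sqrt_div_le_two_div_powr_three_quarters:
  fixes s x :: real
  assumes "0 < x" "s \<le> sqrt 2 / sqrt x"
  shows "sqrt (s / x) \<le> 2 / (2 * x) powr (3 / 4)"
proof -
  have "s / x \<le> sqrt 2 / sqrt x / x"
    using assms by (intro divide_right_mono) auto
  also have "\<dots> = (2 / (2 * x) powr (3 / 4))\<^sup>2"
    using assms by (subst power2_two_div_powr_three_quarters) (auto simp: field_simps)
  finally show ?thesis
    using assms by (simp add: real_le_lsqrt)
qed

lemma self_bounding_deviation_le: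
  fixes d V W r x :: real
  assumes "0 \<le> d" "1 < x" "0 \<le> W" "0 \<le> r" "V \<le> 1 / 4" "V \<le> W + r + d"
    and d_sq: "d\<^sup>2 < (V + 1 / (4 * sqrt x)) / x"
  shows "d \<le> sqrt (W / x) + sqrt (r / x) + 2 / (2 * x) powr (3 / 4)"
proof -
  define \<beta> where "\<beta> = 1 / (4 * sqrt x)"
  have "1 < sqrt x"
    using assms by simp
  then have \<beta>: "0 < \<beta>" "\<beta> \<le> 1 / 4"
    by (auto simp: \<beta>_def)
  have d_sq': "d\<^sup>2 < (V + \<beta>) / x"
    using d_sq by (simp add: \<beta>_def)
  have "(V + \<beta>) / x \<le> (1 / 2) / x"
    using \<beta> assms by (intro divide_right_mono) auto
  then have "d < sqrt ((1 / 2) / x)"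
    using d_sq' assms by (simp add: real_less_rsqrt)
  also have "\<dots> = 1 / (sqrt 2 * sqrt x)"
    by (simp add: real_sqrt_divide real_sqrt_mult)
  finally have "d + \<beta> \<le> (1 / sqrt 2 + 1 / 4) / sqrt x"
    by (simp add: \<beta>_def add_divide_distrib)
  also have "\<dots> \<le> sqrt 2 / sqrt x"
  proof -
    have "1 / sqrt 2 = sqrt 2 / 2"
      by (simp add: field_simps)
    moreover have "1 \<le> sqrt 2"
      by simp
    ultimately have "1 / sqrt 2 + 1 / 4 \<le> sqrt 2"
      by linarith
    then show ?thesis
      using \<open>1 < sqrt x\<close> by (intro divide_right_mono) auto
  qed
  finally have tail: "sqrt ((d + \<beta>) / x) \<le> 2 / (2 * x) powr (3 / 4)"
    using assms by (intro sqrt_div_le_two_div_powr_three_quarters) auto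
  have "(V + \<beta>) / x \<le> (W + r + (d + \<beta>)) / x"
    using assms by (intro divide_right_mono) auto
  then have "d\<^sup>2 < W / x + r / x + (d + \<beta>) / x"
    using d_sq' by (simp add: add_divide_distrib)
  then have "d < sqrt (W / x + r / x + (d + \<beta>) / x)"
    using assms by (simp add: real_less_rsqrt)
  also have "\<dots> \<le> sqrt (W / x) + sqrt (r / x) + sqrt ((d + \<beta>) / x)"
    using assms \<beta> sqrt_add_le_add_sqrt[of "W / x" "r / x"]
      sqrt_add_le_add_sqrt[of "W / x + r / x" "(d + \<beta>) / x"]
    by simp
  finally show ?thesis
    using tail by simp
qed

lemma cdf_error_le_of_small_deviation:
  fixes F G H n \<epsilon> :: real and k :: nat
  assumes F: "0 \<le> F" "F \<le> 1" and G: "0 \<le> G" "G \<le> 1" and H: "0 \<le> H" "H \<le> 1"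
    and "0 < n" "0 < \<epsilon>"
    and G_H: "\<bar>G - H\<bar> \<le> k / n"
    and deviation: "(G - F)\<^sup>2 < deviation_threshold F (n * \<epsilon>)"
  shows "\<bar>F - H\<bar> \<le> sqrt (H * (1 - H) / (n * \<epsilon>)) + (1 / n + 1 / (n * sqrt \<epsilon>)) * k
           + 2 / (2 * n * \<epsilon>) powr (3 / 4)"
proof (cases "n * \<epsilon> \<le> 1")
  case True
  have "(2 * n * \<epsilon>) powr (3 / 4) \<le> 2 powr (3 / 4)"
    using True assms by (intro powr_mono2) auto
  also have "\<dots> \<le> 2 powr 1"
    by (intro powr_mono) auto
  finally have "1 \<le> 2 / (2 * n * \<epsilon>) powr (3 / 4)"
    using assms by simp
  moreover have "\<bar>F - H\<bar> \<le> 1"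
    using F H by linarith
  moreover have "0 \<le> sqrt (H * (1 - H) / (n * \<epsilon>))"
    using H assms by simp
  moreover have "0 \<le> (1 / n + 1 / (n * sqrt \<epsilon>)) * k"
    using assms by simp
  ultimately show ?thesis
    by linarith
next
  case False
  define d where "d = \<bar>F - G\<bar>"
  have "F * (1 - F) \<le> 1 / 4"
    using zero_le_power2[of "F - 1 / 2"] by (simp add: power2_eq_square algebra_simps)
  moreover have "F * (1 - F) \<le> H * (1 - H) + k / n + d"
    using mult_one_minus_le_add_abs_diff[OF F G] mult_one_minus_le_add_abs_diff[OF G H] G_H
    unfolding d_def by linarith
  moreover have "d\<^sup>2 < (F * (1 - F) + 1 / (4 * sqrt (n * \<epsilon>))) / (n * \<epsilon>)"
    using deviation by (simp add: d_def deviation_threshold_def power2_commute)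
  ultimately have "d \<le> sqrt (H * (1 - H) / (n * \<epsilon>)) + sqrt (k / n / (n * \<epsilon>))
                     + 2 / (2 * n * \<epsilon>) powr (3 / 4)"
    using False H assms
      self_bounding_deviation_le[where d = d and x = "n * \<epsilon>" and W = "H * (1 - H)"
        and r = "k / n" and V = "F * (1 - F)"]
    by (auto simp: d_def mult.assoc)
  moreover have "sqrt (k / n / (n * \<epsilon>)) = sqrt k / (n * sqrt \<epsilon>)"
    using assms by (simp add: real_sqrt_divide real_sqrt_mult)
  moreover have "sqrt k / (n * sqrt \<epsilon>) \<le> k / (n * sqrt \<epsilon>)"
    using assms sqrt_of_nat_le_self[of k] by (intro divide_right_mono) auto
  moreover have "\<bar>F - H\<bar> \<le> d + k / n"
    using G_H unfolding d_def by linarith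
  ultimately show ?thesis
    by (simp add: distrib_right)
qed

lemma prod_subset_extend_one:
  assumes "finite I" "J \<subseteq> I"
  shows "(\<Prod>i\<in>J. f i (x i)) = (\<Prod>i\<in>I. (if i \<in> J then f i else (\<lambda>_. 1)) (x i))"
  using assms by (intro prod.mono_neutral_cong_left) auto

context product_prob_space
begin

lemma product_integrable_prod_subset:
  fixes f :: "'i \<Rightarrow> 'a \<Rightarrow> real"
  assumes "finite I" "J \<subseteq> I" "\<And>i. i \<in> J \<Longrightarrow> integrable (M i) (f i)"
  shows "integrable (Pi\<^sub>M I M) (\<lambda>x. \<Prod>i\<in>J. f i (x i))"
  unfolding prod_subset_extend_one[OF assms(1,2)]
  using assms by (intro product_integrable_prod) auto

lemma product_integral_prod_subset:
  fixes f :: "'i \<Rightarrow> 'a \<Rightarrow> real"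
  assumes "finite I" "J \<subseteq> I" "\<And>i. i \<in> J \<Longrightarrow> integrable (M i) (f i)"
  shows "(\<integral>x. (\<Prod>i\<in>J. f i (x i)) \<partial>Pi\<^sub>M I M) = (\<Prod>i\<in>J. integral\<^sup>L (M i) (f i))"
proof -
  have "(\<integral>x. (\<Prod>i\<in>J. f i (x i)) \<partial>Pi\<^sub>M I M)
      = (\<Prod>i\<in>I. integral\<^sup>L (M i) (if i \<in> J then f i else (\<lambda>_. 1)))"
    unfolding prod_subset_extend_one[OF assms(1,2)]
    using assms by (intro product_integral_prod) auto
  also have "\<dots> = (\<Prod>i\<in>J. integral\<^sup>L (M i) (f i))"
    using assms by (intro prod.mono_neutral_cong_right) (auto simp: M.prob_space)
  finally show ?thesis .
qed

lemma product_integral_square_sum_centered: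
  fixes y :: "'i \<Rightarrow> 'a \<Rightarrow> real"
  assumes "finite I"
    and y_borel: "\<And>i. i \<in> I \<Longrightarrow> y i \<in> borel_measurable (M i)"
    and y_square: "\<And>i. i \<in> I \<Longrightarrow> integrable (M i) (\<lambda>z. (y i z)\<^sup>2)"
    and "\<And>i. i \<in> I \<Longrightarrow> (\<integral>z. y i z \<partial>M i) = 0"
  shows "(\<integral>x. (\<Sum>i\<in>I. y i (x i))\<^sup>2 \<partial>Pi\<^sub>M I M) = (\<Sum>i\<in>I. \<integral>z. (y i z)\<^sup>2 \<partial>M i)"
proof -
  have y_int: "integrable (M i) (y i)" if "i \<in> I" for i
    using M.square_integrable_imp_integrable[OF y_borel[OF that] y_square[OF that]] .
  have pair: "integrable (Pi\<^sub>M I M) (\<lambda>x. y i (x i) * y j (x j)) \<and>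
      (\<integral>x. y i (x i) * y j (x j) \<partial>Pi\<^sub>M I M) = (if i = j then \<integral>z. (y i z)\<^sup>2 \<partial>M i else 0)"
    if "i \<in> I" "j \<in> I" for i j
  proof (cases "i = j")
    case True
    have "y i (x i) * y j (x j) = (\<Prod>k\<in>{i}. (y k (x k))\<^sup>2)" for x
      using True by (simp add: power2_eq_square)
    then show ?thesis
      using True that assms product_integrable_prod_subset[of "{i}" "\<lambda>k z. (y k z)\<^sup>2"]
        product_integral_prod_subset[of "{i}" "\<lambda>k z. (y k z)\<^sup>2"]
      by simp
  next
    case False
    have "y i (x i) * y j (x j) = (\<Prod>k\<in>{i, j}. y k (x k))" for x
      using False by simp
    then show ?thesis
      using False that assms y_int product_integrable_prod_subset[of "{i, j}" y]
        product_integral_prod_subset[of "{i, j}" y]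
      by auto
  qed
  have "(\<integral>x. (\<Sum>i\<in>I. y i (x i))\<^sup>2 \<partial>Pi\<^sub>M I M)
      = (\<integral>x. (\<Sum>i\<in>I. \<Sum>j\<in>I. y i (x i) * y j (x j)) \<partial>Pi\<^sub>M I M)"
    by (simp add: power2_eq_square sum_product)
  also have "\<dots> = (\<Sum>i\<in>I. \<Sum>j\<in>I. \<integral>x. y i (x i) * y j (x j) \<partial>Pi\<^sub>M I M)"
    using pair by (simp add: Bochner_Integration.integral_sum Bochner_Integration.integrable_sum)
  also have "\<dots> = (\<Sum>i\<in>I. \<Sum>j\<in>I. if i = j then \<integral>z. (y i z)\<^sup>2 \<partial>M i else 0)"
    using pair by (intro sum.cong refl) auto
  also have "\<dots> = (\<Sum>i\<in>I. \<integral>z. (y i z)\<^sup>2 \<partial>M i)"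
    using assms by simp
  finally show ?thesis .
qed

end

lemma (in prob_space) prob_ge_of_exceptional_set:
  assumes "B \<in> events" "prob B \<le> \<epsilon>" "\<And>x. x \<in> space M - B \<Longrightarrow> P x"
    and "{x \<in> space M. P x} \<in> events"
  shows "1 - \<epsilon> \<le> prob {x \<in> space M. P x}"
proof -
  have "1 - \<epsilon> \<le> prob (space M - B)"
    using assms by (simp add: prob_compl)
  also have "\<dots> \<le> prob {x \<in> space M. P x}"
    using assms by (intro finite_measure_mono) auto
  finally show ?thesis .
qed

lemma ecdf_nonneg: "0 \<le> ecdf N Q w t"
  unfolding ecdf_def by (simp add: sum_nonneg)

lemma ecdf_le_one: "ecdf N Q w t \<le> 1"
proof -
  have "(\<Sum>n=1..N. if Q (w n) \<le> t then 1 else 0) \<le> real N"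
    using sum_bounded_above[of "{1..N}" "\<lambda>n. if Q (w n) \<le> t then 1 else (0::real)" 1] by simp
  then show ?thesis
    by (cases "N = 0") (auto simp: ecdf_def field_simps)
qed

lemma abs_ecdf_diff_le:
  "\<bar>ecdf N Q w t - ecdf N Qh w t\<bar>
     \<le> (\<Sum>n=1..N. if Qh (w n) - \<bar>Q (w n) - Qh (w n)\<bar> \<le> t \<and> t \<le> Qh (w n) + \<bar>Q (w n) - Qh (w n)\<bar>
                  then 1 else (0::real)) / real N"
proof -
  have indicator_diff: "\<bar>(if q \<le> t then 1 else 0) - (if h \<le> t then 1 else 0)\<bar>
      \<le> (if h - \<bar>q - h\<bar> \<le> t \<and> t \<le> h + \<bar>q - h\<bar> then 1 else (0::real))" for q h :: real
    by auto
  have "\<bar>ecdf N Q w t - ecdf N Qh w t\<bar>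
      = \<bar>\<Sum>n=1..N. (if Q (w n) \<le> t then 1 else 0) - (if Qh (w n) \<le> t then 1 else (0::real))\<bar> / real N"
    by (simp add: ecdf_def sum_subtractf flip: diff_divide_distrib)
  also have "\<dots> \<le> (\<Sum>n=1..N. \<bar>(if Q (w n) \<le> t then 1 else 0) - (if Qh (w n) \<le> t then 1 else (0::real))\<bar>) / real N"
    by (intro divide_right_mono sum_abs) simp
  also have "\<dots> \<le> (\<Sum>n=1..N. if Qh (w n) - \<bar>Q (w n) - Qh (w n)\<bar> \<le> t \<and> t \<le> Qh (w n) + \<bar>Q (w n) - Qh (w n)\<bar>
                  then 1 else (0::real)) / real N"
    by (intro divide_right_mono sum_mono indicator_diff) simp
  finally show ?thesis .
qed

lemma borel_measurable_sum_sample [measurable]: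
  fixes f :: "'p \<Rightarrow> real"
  assumes "f \<in> borel_measurable D"
  shows "(\<lambda>w. \<Sum>n=1..N. f (w n)) \<in> borel_measurable (sample_space D N)"
  unfolding sample_space_def
  using assms by measurable

lemma borel_measurable_ecdf [measurable]:
  "Q \<in> borel_measurable D \<Longrightarrow> (\<lambda>w. ecdf N Q w t) \<in> borel_measurable (sample_space D N)"
  unfolding ecdf_def by measurable

lemma cdf_QoI_nonneg: "0 \<le> cdf_QoI D Q t"
  by (simp add: cdf_QoI_def)

lemma cdf_QoI_le_one: "prob_space D \<Longrightarrow> cdf_QoI D Q t \<le> 1"
  by (simp add: cdf_QoI_def prob_space.prob_le_1)

lemma integral_if_le_eq_cdf_QoI:
  assumes "Q \<in> borel_measurable D" "finite_measure D"
  shows "(\<integral>z. (if Q z \<le> t then 1 else 0 :: real) \<partial>D) = cdf_QoI D Q t"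
proof -
  interpret finite_measure D by fact
  have "(\<integral>z. (if Q z \<le> t then 1 else 0 :: real) \<partial>D) = (\<integral>z. indicator {z \<in> space D. Q z \<le> t} z \<partial>D)"
    by (intro Bochner_Integration.integral_cong) (auto simp: indicator_def)
  also have "\<dots> = cdf_QoI D Q t"
    using assms by (simp add: cdf_QoI_def)
  finally show ?thesis .
qed

lemma integral_ecdf_deviation_square:
  assumes "prob_space D" and [measurable]: "Q \<in> borel_measurable D" and "1 \<le> N"
  shows "(\<integral>w. (ecdf N Q w t - cdf_QoI D Q t)\<^sup>2 \<partial>sample_space D N)
           = cdf_QoI D Q t * (1 - cdf_QoI D Q t) / N"
proof -
  interpret D: prob_space D by fact
  interpret product_prob_space "\<lambda>_. D" "{1..N}"
    by unfold_locales
  define F where "F = cdf_QoI D Q t"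
  define ind where "ind z = (if Q z \<le> t then 1 else 0 :: real)" for z
  define y where "y z = ind z - F" for z
  have [measurable]: "ind \<in> borel_measurable D"
    unfolding ind_def by measurable
  have ind_int: "integrable D ind" and ind_sq_int: "integrable D (\<lambda>z. (ind z)\<^sup>2)"
    by (auto intro!: D.integrable_const_bound[where B = 1] simp: ind_def)
  have ind_integral: "(\<integral>z. ind z \<partial>D) = F"
    unfolding ind_def F_def using D.finite_measure_axioms by (simp add: integral_if_le_eq_cdf_QoI)
  have "y \<in> borel_measurable D"
    unfolding y_def by measurable
  moreover have "integrable D (\<lambda>z. (y z)\<^sup>2)"
    using ind_int ind_sq_int by (simp add: y_def power2_diff)
  moreover have "(\<integral>z. y z \<partial>D) = 0"
    using ind_int ind_integral by (simp add: y_def D.prob_space)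
  moreover have "(\<integral>z. (y z)\<^sup>2 \<partial>D) = F * (1 - F)"
  proof -
    have "(y z)\<^sup>2 = (1 - 2 * F) * ind z + F\<^sup>2" for z
      by (simp add: y_def ind_def power2_eq_square algebra_simps)
    then have "(\<integral>z. (y z)\<^sup>2 \<partial>D) = (\<integral>z. (1 - 2 * F) * ind z + F\<^sup>2 \<partial>D)"
      by simp
    also have "\<dots> = (1 - 2 * F) * F + F\<^sup>2"
      using ind_int ind_integral by (simp add: D.prob_space)
    finally show ?thesis
      by (simp add: power2_eq_square algebra_simps)
  qed
  ultimately have "(\<integral>w. (\<Sum>n=1..N. y (w n))\<^sup>2 \<partial>Pi\<^sub>M {1..N} (\<lambda>_. D)) = N * (F * (1 - F))"
    using product_integral_square_sum_centered[of "\<lambda>_. y"] by simp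
  moreover have "ecdf N Q w t - F = (\<Sum>n=1..N. y (w n)) / N" for w
    using assms by (simp add: ecdf_def y_def ind_def sum_subtractf field_simps)
  ultimately show ?thesis
    using assms by (simp add: sample_space_def F_def power_divide power2_eq_square)
qed

lemma ecdf_Chebyshev:
  assumes "prob_space D" and [measurable]: "Q \<in> borel_measurable D" and "1 \<le> N" "0 < c"
  shows "measure (sample_space D N) {w \<in> space (sample_space D N). c \<le> (ecdf N Q w t - cdf_QoI D Q t)\<^sup>2}
           \<le> cdf_QoI D Q t * (1 - cdf_QoI D Q t) / (N * c)"
proof -
  interpret prob_space "sample_space D N"
    unfolding sample_space_def using assms(1) by (rule prob_space_PiM)
  have "\<bar>ecdf N Q w t - cdf_QoI D Q t\<bar> \<le> 1" for w
    using ecdf_nonneg[of N Q w t] ecdf_le_one[of N Q w t] cdf_QoI_nonneg[of D Q t]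
      cdf_QoI_le_one[OF assms(1), of Q t]
    by linarith
  then have "integrable (sample_space D N) (\<lambda>w. (ecdf N Q w t - cdf_QoI D Q t)\<^sup>2)"
    by (intro integrable_const_bound[where B = 1]) (auto simp: abs_square_le_1)
  then have "measure (sample_space D N) {w \<in> space (sample_space D N). c \<le> (ecdf N Q w t - cdf_QoI D Q t)\<^sup>2}
      \<le> (\<integral>w. (ecdf N Q w t - cdf_QoI D Q t)\<^sup>2 \<partial>sample_space D N) / c"
    using assms by (intro integral_Markov_inequality_measure[where A = "space (sample_space D N)"]) auto
  then show ?thesis
    using assms by (simp add: integral_ecdf_deviation_square)
qed

lemma prob_ecdf_deviation_ge_threshold_le:
  fixes \<epsilon> :: real
  assumes "prob_space D" and [measurable]: "Q \<in> borel_measurable D" and "1 \<le> N" "0 < \<epsilon>"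
  shows "measure (sample_space D N)
           {w \<in> space (sample_space D N).
              deviation_threshold (cdf_QoI D Q t) (real N * \<epsilon>) \<le> (ecdf N Q w t - cdf_QoI D Q t)\<^sup>2}
         \<le> \<epsilon>"
proof -
  let ?F = "cdf_QoI D Q t"
  let ?c = "deviation_threshold ?F (real N * \<epsilon>)"
  have "0 < ?c"
    using cdf_QoI_nonneg[of D Q t] cdf_QoI_le_one[OF assms(1), of Q t] assms
    by (auto simp: deviation_threshold_def intro!: divide_pos_pos add_nonneg_pos)
  moreover have "\<epsilon> * (real N * ?c) = ?F * (1 - ?F) + 1 / (4 * sqrt (real N * \<epsilon>))"
    using assms by (simp add: deviation_threshold_def)
  ultimately have "?F * (1 - ?F) / (real N * ?c) \<le> \<epsilon>"
    using assms by (simp add: pos_divide_le_eq)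
  then show ?thesis
    using ecdf_Chebyshev[OF assms(1-3) \<open>0 < ?c\<close>, of t] by linarith
qed

lemma cdf_QoI_ecdf_error_le:
  fixes \<epsilon> :: real
  assumes "prob_space D" "0 < \<epsilon>" "1 \<le> N"
    and "(ecdf N Q w t - cdf_QoI D Q t)\<^sup>2 < deviation_threshold (cdf_QoI D Q t) (real N * \<epsilon>)"
  shows "\<bar>cdf_QoI D Q t - ecdf N Qh w t\<bar>
           \<le> sqrt (ecdf N Qh w t * (1 - ecdf N Qh w t) / (real N * \<epsilon>))
             + (1 / real N + 1 / (real N * sqrt \<epsilon>))
               * \<bar>\<Sum>n=1..N. if Qh (w n) - \<bar>Q (w n) - Qh (w n)\<bar> \<le> t
                                \<and> t \<le> Qh (w n) + \<bar>Q (w n) - Qh (w n)\<bar>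
                              then 1 else (0::real)\<bar>
             + 2 / (2 * real N * \<epsilon>) powr (3/4)"
proof -
  define K where "K = card ({1..N} \<inter> {n. Qh (w n) - \<bar>Q (w n) - Qh (w n)\<bar> \<le> t
                                          \<and> t \<le> Qh (w n) + \<bar>Q (w n) - Qh (w n)\<bar>})"
  have K: "(\<Sum>n=1..N. if Qh (w n) - \<bar>Q (w n) - Qh (w n)\<bar> \<le> t \<and> t \<le> Qh (w n) + \<bar>Q (w n) - Qh (w n)\<bar>
                      then 1 else (0::real)) = K"
    by (simp add: K_def flip: of_bool_def)
  have "\<bar>ecdf N Q w t - ecdf N Qh w t\<bar> \<le> K / real N"
    using abs_ecdf_diff_le[of N Q w t Qh] K by simp
  then have "\<bar>cdf_QoI D Q t - ecdf N Qh w t\<bar>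
      \<le> sqrt (ecdf N Qh w t * (1 - ecdf N Qh w t) / (real N * \<epsilon>))
        + (1 / real N + 1 / (real N * sqrt \<epsilon>)) * K + 2 / (2 * real N * \<epsilon>) powr (3 / 4)"
    using assms cdf_QoI_nonneg cdf_QoI_le_one ecdf_nonneg ecdf_le_one
    by (intro cdf_error_le_of_small_deviation[where G = "ecdf N Q w t"]) auto
  then show ?thesis
    using K by simp
qed

theorem theorem4:
  fixes D :: "'p measure" and Q Qh :: "'p \<Rightarrow> real"
    and \<epsilon> :: real and N :: nat and t :: real
  assumes "prob_space D"
    and "Q \<in> borel_measurable D" and "Qh \<in> borel_measurable D"
    and "0 < \<epsilon>" and "\<epsilon> < 1" and "N \<ge> 1"
  shows "measure (sample_space D N)
           {w \<in> space (sample_space D N).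
              \<bar>cdf_QoI D Q t - ecdf N Qh w t\<bar>
                \<le> sqrt (ecdf N Qh w t * (1 - ecdf N Qh w t) / (real N * \<epsilon>))
                  + (1 / real N + 1 / (real N * sqrt \<epsilon>))
                    * \<bar>\<Sum>n=1..N. if Qh (w n) - \<bar>Q (w n) - Qh (w n)\<bar> \<le> t
                                     \<and> t \<le> Qh (w n) + \<bar>Q (w n) - Qh (w n)\<bar>
                                   then 1 else (0::real)\<bar>
                  + 2 / (2 * real N * \<epsilon>) powr (3/4)}
         \<ge> 1 - 2 * \<epsilon> + \<epsilon>\<^sup>2"
proof -
  let ?M = "sample_space D N"
  define B where "B = {w \<in> space ?M.
    deviation_threshold (cdf_QoI D Q t) (real N * \<epsilon>) \<le> (ecdf N Q w t - cdf_QoI D Q t)\<^sup>2}"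
  note [measurable] = assms(2,3)
  interpret prob_space ?M
    unfolding sample_space_def using assms(1) by (rule prob_space_PiM)
  have B_events: "B \<in> sets ?M"
    unfolding B_def by measurable
  have B_small: "measure ?M B \<le> \<epsilon>"
    unfolding B_def by (rule prob_ecdf_deviation_ge_threshold_le[OF assms(1,2,6,4)])
  have "1 - 2 * \<epsilon> + \<epsilon>\<^sup>2 \<le> 1 - \<epsilon>"
    using assms by (simp add: power2_eq_square mult_left_le)
  then show ?thesis
    apply (rule order_trans[OF _ prob_ge_of_exceptional_set[OF B_events B_small]])
     apply (rule cdf_QoI_ecdf_error_le[OF assms(1,4,6)])
     apply (simp add: B_def not_le)
    by measurable
qed

end
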